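(* Suppose the basic set of weighting functions is used, and suppose that (i) Assumption A8 holds and (ii) $K$ has support $[-1,1]$, is continuous, and is strictly positive on $(-1,1)$. Then Assumption A9 holds.
   Context: For each $n$, $X_1,\dots,X_n$ are i.i.d. copies of a scalar random variable $X$ with support infimum $s_l$ and supremum $s_r$. Basic set of weighting functions: $\mathcal{S}_n=\{(x,h):x\in\{X_1,\dots,X_n\},h\in H_n\}$, $H_n=\{h=h_{\max}u^l:h\ge h_{\min},l=0,1,2,\dots\}$, $u=0.5$, $h_{\max}=\max_{i,j}|X_i-X_j|/2$, $h_{\min}=0.4h_{\max}(\log n/n)^{1/3}$, with kernel weighting functions $Q(x_1,x_2,(x,h))=|x_1-x_2|^kK((x_1-x)/h)K((x_2-x)/h)$ for a fixed $k\ge0$; $p=|\mathcal{S}_n|$. A8: $c_3(x_2-x_1)\le\Pr(X\in[x_1,x_2])\le C_3(x_2-x_1)$ for all $[x_1,x_2]\subset[s_l,s_r]$, constants $c_3,C_3>0$. A9 (for fixed $\beta\in(0,1]$, $h_n=(\log p/n)^{1/(2\beta+3)}$, and some constants $c_4,C_4,c_5>0$): with probability approaching one, for all $[x_1,x_2]\subset[s_l,s_r]$ with $x_2-x_1=h_n$ there exists $s\in\mathcal{S}_n$ such that (i) the support of $Q(\cdot,\cdot,s)$ is contained in $[x_1,x_2]^2$, (ii) $Q(\cdot,\cdot,s)\le C_4h_n^k$, (iii) there are non-intersecting subintervals $[x_{l1},x_{r1}],[x_{l2},x_{r2}]$ of $[x_1,x_2]$ with $x_{r1}-x_{l1}\ge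 c_5h_n$, $x_{r2}-x_{l2}\ge c_5h_n$, $x_{l2}-x_{r1}\ge c_5h_n$, and $Q(y_1,y_2,s)\ge c_4h_n^k$ whenever $y_1\in[x_{l1},x_{r1}]$, $y_2\in[x_{l2},x_{r2}]$. *)

theory Defs
  imports "HOL-Probability.Probability"
begin

text \<open>Power with the convention 0^0 = 1 (exponent k \<ge> 0 real).\<close>
definition kpow :: "real \<Rightarrow> real \<Rightarrow> real" where
  "kpow x k = (if k = 0 then 1 else x powr k)"

definition dist_support :: "real measure \<Rightarrow> real set" where
  "dist_support D = {x. \<forall>e>0. measure D {x - e<..<x + e} > 0}"

text \<open>Basic set of weighting functions built from the sample w 0, ..., w (n-1).\<close>
definition h_max :: "nat \<Rightarrow> (nat \<Rightarrow> real) \<Rightarrow> real" where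
  "h_max n w = Max {\<bar>w i - w j\<bar> | i j. i < n \<and> j < n} / 2"

definition h_min :: "nat \<Rightarrow> (nat \<Rightarrow> real) \<Rightarrow> real" where
  "h_min n w = 0.4 * h_max n w * (ln (real n) / real n) powr (1/3)"

definition H_set :: "nat \<Rightarrow> (nat \<Rightarrow> real) \<Rightarrow> real set" where
  "H_set n w = {h. \<exists>l::nat. h = h_max n w * (1/2) ^ l \<and> h \<ge> h_min n w}"

definition S_set :: "nat \<Rightarrow> (nat \<Rightarrow> real) \<Rightarrow> (real \<times> real) set" where
  "S_set n w = {(w i, h) | i h. i < n \<and> h \<in> H_set n w}"

definition Qw :: "(real \<Rightarrow> real) \<Rightarrow> real \<Rightarrow> real \<Rightarrow> real \<Rightarrow> real \<times> real \<Rightarrow> real" where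
  "Qw K k y1 y2 s = kpow \<bar>y1 - y2\<bar> k * K ((y1 - fst s) / snd s) * K ((y2 - fst s) / snd s)"

definition A9_event ::
  "(real \<Rightarrow> real) \<Rightarrow> real \<Rightarrow> real \<Rightarrow> real \<Rightarrow> real \<Rightarrow> real \<Rightarrow> real \<Rightarrow> real \<Rightarrow> nat \<Rightarrow> (nat \<Rightarrow> real) \<Rightarrow> bool" where
  "A9_event K k sl sr \<beta> c4 C4 c5 n w =
    (let p = card (S_set n w);
         hn = (ln (real p) / real n) powr (1 / (2 * \<beta> + 3))
     in \<forall>x1 x2. sl \<le> x1 \<and> x2 \<le> sr \<and> x2 - x1 = hn \<longrightarrow>
          (\<exists>s\<in>S_set n w.
             closure {(y1, y2). Qw K k y1 y2 s \<noteq> 0} \<subseteq> {x1..x2} \<times> {x1..x2} \<and>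
             (\<forall>y1 y2. Qw K k y1 y2 s \<le> C4 * kpow hn k) \<and>
             (\<exists>xl1 xr1 xl2 xr2. x1 \<le> xl1 \<and> xr2 \<le> x2 \<and>
                xr1 - xl1 \<ge> c5 * hn \<and> xr2 - xl2 \<ge> c5 * hn \<and> xl2 - xr1 \<ge> c5 * hn \<and>
                (\<forall>y1 y2. y1 \<in> {xl1..xr1} \<and> y2 \<in> {xl2..xr2} \<longrightarrow>
                    Qw K k y1 y2 s \<ge> c4 * kpow hn k))))"

end

theory Submission
  imports Defs "HOL-Real_Asymp.Real_Asymp"
begin

text \<open>Split the support \<open>[sl, sr]\<close> into a grid of \<open>N \<sim> n^(1/3)\<close> cells. By A8 every cell
  has probability \<open>\<ge> c (sr - sl) / N\<close>, so by a union bound all cells contain a sample point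
  with probability \<open>\<ge> 1 - N exp (- c (sr - sl) n / N) \<rightarrow> 1\<close>. On that event the argument is
  deterministic: any window \<open>[x1, x2]\<close> of length \<open>h_n\<close> contains a sample point \<open>x\<close> at
  distance \<open>\<ge> h_n / 4\<close> from its ends, because the mesh is below \<open>h_n / 16\<close>; and the dyadic
  bandwidths contain some \<open>h \<in> (h_n / 8, h_n / 4]\<close>, because \<open>h_min = O((log n / n)^(1/3))\<close> is
  eventually below \<open>h_n / 8\<close> (this uses \<open>1 / (2 \<beta> + 3) < 1 / 3\<close>). The kernel weight at
  \<open>(x, h)\<close> is supported in \<open>[x - h, x + h]^2 \<subseteq> [x1, x2]^2\<close>, bounded by \<open>sup K^2 h_n^k\<close>,
  and on \<open>[x - h/2, x - h/6] \<times> [x + h/6, x + h/2]\<close> it is at least \<open>(min K)^2 (h_n / 24)^k\<close>,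
  the minimum taken over \<open>[-1/2, 1/2]\<close>.\<close>

lemma kpow_nonneg: "0 \<le> kpow x k"
  by (simp add: kpow_def)

lemma kpow_mono: "0 \<le> x \<Longrightarrow> x \<le> y \<Longrightarrow> 0 \<le> k \<Longrightarrow> kpow x k \<le> kpow y k"
  by (simp add: kpow_def powr_mono2)

lemma kpow_mult: "0 < c \<Longrightarrow> 0 \<le> x \<Longrightarrow> kpow (c * x) k = c powr k * kpow x k"
  by (simp add: kpow_def powr_mult)

section \<open>Dyadic bandwidths\<close>

lemma exists_power_half_between:
  fixes y H :: real
  assumes "0 < y" "y \<le> H"
  obtains l :: nat where "y / 2 < H * (1/2) ^ l" "H * (1/2) ^ l \<le> y"
proof -
  have "H > 0" using assms by linarith
  obtain l0 :: nat where "(1/2::real) ^ l0 < y / H"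
    using real_arch_pow_inv[of "y / H" "1/2::real"] assms \<open>H > 0\<close> by auto
  then have ex: "H * (1/2) ^ l0 \<le> y" using \<open>H > 0\<close> by (simp add: field_simps)
  define l where "l = (LEAST l::nat. H * (1/2) ^ l \<le> y)"
  have le: "H * (1/2) ^ l \<le> y" unfolding l_def by (rule LeastI[of _ l0]) (rule ex)
  have "y / 2 < H * (1/2) ^ l"
  proof (cases l)
    case 0
    then show ?thesis using assms by auto
  next
    case (Suc m)
    then have "\<not> H * (1/2) ^ m \<le> y" using not_less_Least[of m "\<lambda>l. H * (1/2) ^ l \<le> y"] l_def by auto
    then show ?thesis using Suc by auto
  qed
  with le that show ?thesis by blast
qed

lemma h_max_ge: "i < n \<Longrightarrow> j < n \<Longrightarrow> \<bar>w i - w j\<bar> / 2 \<le> h_max n w"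
proof -
  assume "i < n" "j < n"
  let ?A = "{\<bar>w i - w j\<bar> | i j. i < n \<and> j < n}"
  have "?A = (\<lambda>(i, j). \<bar>w i - w j\<bar>) ` ({..<n} \<times> {..<n})" by auto
  then have "finite ?A" by simp
  moreover have "\<bar>w i - w j\<bar> \<in> ?A" using \<open>i < n\<close> \<open>j < n\<close> by blast
  ultimately show ?thesis unfolding h_max_def by simp
qed

lemma h_max_le:
  assumes "0 < n" "\<forall>i<n. w i \<in> {a..b}"
  shows "h_max n w \<le> (b - a) / 2"
proof -
  let ?A = "{\<bar>w i - w j\<bar> | i j. i < n \<and> j < n}"
  have "?A = (\<lambda>(i, j). \<bar>w i - w j\<bar>) ` ({..<n} \<times> {..<n})" by auto
  then have "finite ?A" "?A \<noteq> {}" using assms(1) by auto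
  moreover have "\<forall>d\<in>?A. d \<le> b - a"
  proof clarify
    fix i j assume "i < n" "j < n"
    then show "\<bar>w i - w j\<bar> \<le> b - a"
      using assms(2)[rule_format, of i] assms(2)[rule_format, of j] by auto
  qed
  ultimately show ?thesis unfolding h_max_def by simp
qed

lemma h_min_le_h_max:
  assumes "1 \<le> n" "0 \<le> h_max n w"
  shows "h_min n w \<le> h_max n w"
proof -
  have "ln (real n) \<le> real n" using assms(1) ln_le_minus_one[of "real n"] by simp
  then have "ln (real n) / real n \<le> 1" using assms(1) by simp
  then have "(ln (real n) / real n) powr (1/3) \<le> 1"
    using assms(1) by (intro powr_le1) auto
  then have "h_max n w * (ln (real n) / real n) powr (1/3) \<le> h_max n w * 1"
    using assms(2) by (intro mult_left_mono) auto
  then show ?thesis using assms(2) unfolding h_min_def mult.assoc by linarith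
qed

lemma h_max_in_H_set: "1 \<le> n \<Longrightarrow> 0 \<le> h_max n w \<Longrightarrow> h_max n w \<in> H_set n w"
  unfolding H_set_def using h_min_le_h_max by (auto intro!: exI[of _ 0])

lemma h_min_pos: "2 \<le> n \<Longrightarrow> 0 < h_max n w \<Longrightarrow> 0 < h_min n w"
  unfolding h_min_def by simp

lemma finite_H_set:
  assumes "0 < h_min n w"
  shows "finite (H_set n w)"
proof -
  have hmax: "0 < h_max n w"
    using assms unfolding h_min_def by (simp add: zero_less_mult_iff)
  obtain M :: nat where M: "(1/2::real) ^ M < h_min n w / h_max n w"
    using real_arch_pow_inv[of "h_min n w / h_max n w" "1/2::real"] assms hmax by auto
  have "H_set n w \<subseteq> (\<lambda>l. h_max n w * (1/2) ^ l) ` {..<M}"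
  proof
    fix h assume "h \<in> H_set n w"
    then obtain l :: nat where l: "h = h_max n w * (1/2) ^ l" "h_min n w \<le> h"
      unfolding H_set_def by auto
    have "h_min n w / h_max n w \<le> (1/2) ^ l" using l hmax by (simp add: pos_divide_le_eq mult.commute)
    have "\<not> M \<le> l"
    proof
      assume "M \<le> l"
      then have "(1/2::real) ^ l \<le> (1/2) ^ M" by (rule power_decreasing) auto
      with M \<open>h_min n w / h_max n w \<le> (1/2) ^ l\<close> show False by linarith
    qed
    then show "h \<in> (\<lambda>l. h_max n w * (1/2) ^ l) ` {..<M}" using l by auto
  qed
  then show ?thesis by (rule finite_subset) simp
qed

lemma finite_S_set: "finite (H_set n w) \<Longrightarrow> finite (S_set n w)"
proof -
  assume "finite (H_set n w)"
  moreover have "S_set n w \<subseteq> (\<lambda>(i, h). (w i, h)) ` ({..<n} \<times> H_set n w)"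
    unfolding S_set_def by auto
  ultimately show ?thesis using finite_subset by blast
qed

lemma card_S_set_ge_2:
  assumes "finite (S_set n w)" "h \<in> H_set n w" "i < n" "j < n" "w i \<noteq> w j"
  shows "2 \<le> card (S_set n w)"
proof -
  have "{(w i, h), (w j, h)} \<subseteq> S_set n w" unfolding S_set_def using assms(2-4) by blast
  from card_mono[OF assms(1) this] show ?thesis using assms(5) by simp
qed

lemma exists_H_set_between:
  assumes "0 < y" "y \<le> h_max n w" "2 * h_min n w \<le> y"
  obtains h where "h \<in> H_set n w" "y / 2 < h" "h \<le> y"
proof -
  obtain l :: nat where l: "y / 2 < h_max n w * (1/2) ^ l" "h_max n w * (1/2) ^ l \<le> y"
    using exists_power_half_between assms(1,2) by blast
  then have "h_max n w * (1/2) ^ l \<in> H_set n w" unfolding H_set_def using assms(3) by auto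
  with l that show ?thesis by blast
qed

section \<open>Samples covering a grid\<close>

definition grid_cell :: "real \<Rightarrow> real \<Rightarrow> nat \<Rightarrow> nat \<Rightarrow> real set" where
  "grid_cell a b N j = {a + real j * ((b - a) / N) .. a + (real j + 1) * ((b - a) / N)}"

lemma grid_cover_hits:
  assumes "a < b" "0 < N" and cover: "\<forall>j<N. \<exists>i<n. w i \<in> grid_cell a b N j"
    and "a \<le> u" "u + 2 * ((b - a) / N) \<le> b"
  obtains i where "i < n" "u \<le> w i" "w i \<le> u + 2 * ((b - a) / N)"
proof -
  define \<delta> where "\<delta> = (b - a) / N"
  have \<delta>: "0 < \<delta>" "real N * \<delta> = b - a" using assms(1,2) unfolding \<delta>_def by auto
  define j where "j = nat \<lceil>(u - a) / \<delta>\<rceil>"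
  have "real j = of_int \<lceil>(u - a) / \<delta>\<rceil>" unfolding j_def using assms(4) \<delta>(1) by simp
  then have "(u - a) / \<delta> \<le> real j" "real j < (u - a) / \<delta> + 1" by linarith+
  then have lo: "u \<le> a + real j * \<delta>" and hi: "a + (real j + 1) * \<delta> < u + 2 * \<delta>"
    using \<delta>(1) by (auto simp: field_simps)
  have "(real j + 1) * \<delta> < real N * \<delta>" using hi assms(5) \<delta> unfolding \<delta>_def by linarith
  then have "j < N" using \<delta>(1) by simp
  then obtain i where "i < n" "w i \<in> grid_cell a b N j" using cover by blast
  with lo hi that show ?thesis unfolding grid_cell_def \<delta>_def by force
qed

lemma grid_cover_spread:
  assumes "a < b" "8 \<le> N" and cover: "\<forall>j<N. \<exists>i<n. w i \<in> grid_cell a b N j"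
  obtains i j where "i < n" "j < n" "(b - a) / 2 \<le> w j - w i"
proof -
  define \<delta> where "\<delta> = (b - a) / N"
  have "0 < \<delta>" using assms(1,2) unfolding \<delta>_def by simp
  then have "8 * \<delta> \<le> real N * \<delta>" using assms(2) by (intro mult_right_mono) auto
  also have "real N * \<delta> = b - a" using assms(2) unfolding \<delta>_def by simp
  finally have "8 * \<delta> \<le> b - a" .
  have "0 < N" using assms(2) by simp
  have "\<exists>i<n. w i \<le> a + 2 * \<delta>"
    by (rule grid_cover_hits[OF assms(1) \<open>0 < N\<close> cover, of a, folded \<delta>_def])
      (use \<open>8 * \<delta> \<le> b - a\<close> \<open>0 < \<delta>\<close> in auto)
  moreover have "\<exists>j<n. b - 2 * \<delta> \<le> w j"
    by (rule grid_cover_hits[OF assms(1) \<open>0 < N\<close> cover, of "b - 2 * \<delta>", folded \<delta>_def])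
      (use \<open>8 * \<delta> \<le> b - a\<close> \<open>0 < \<delta>\<close> in auto)
  ultimately show ?thesis using \<open>8 * \<delta> \<le> b - a\<close> that by fastforce
qed

lemma h_max_card_S_set_of_grid_cover:
  assumes "a < b" "2 \<le> n" "8 \<le> N"
    and samp: "\<forall>i<n. w i \<in> {a..b}" and cover: "\<forall>j<N. \<exists>i<n. w i \<in> grid_cell a b N j"
  shows "(b - a) / 4 \<le> h_max n w" "h_max n w \<le> (b - a) / 2" "2 \<le> card (S_set n w)"
proof -
  obtain i0 i1 where i: "i0 < n" "i1 < n" "(b - a) / 2 \<le> w i1 - w i0"
    using grid_cover_spread[OF \<open>a < b\<close> \<open>8 \<le> N\<close> cover] by blast
  show hmax: "(b - a) / 4 \<le> h_max n w" "h_max n w \<le> (b - a) / 2"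
    using h_max_ge[OF i(2,1), of w] h_max_le[of n w a b] i(3) samp \<open>2 \<le> n\<close> by auto
  have "0 < h_min n w" using h_min_pos[OF \<open>2 \<le> n\<close>] hmax \<open>a < b\<close> by simp
  then have "finite (S_set n w)" by (intro finite_S_set finite_H_set)
  moreover have "h_max n w \<in> H_set n w"
    using h_max_in_H_set[of n w] hmax \<open>2 \<le> n\<close> \<open>a < b\<close> by simp
  moreover have "w i0 \<noteq> w i1" using i(3) \<open>a < b\<close> by auto
  ultimately show "2 \<le> card (S_set n w)" using card_S_set_ge_2 i(1,2) by blast
qed

section \<open>Kernel weights\<close>

lemma abs_le_of_kernel_ne_zero:
  fixes K :: "real \<Rightarrow> real" and x y h :: real
  assumes "\<forall>t. K t \<noteq> 0 \<longrightarrow> \<bar>t\<bar> \<le> 1" "0 < h" "K ((y - x) / h) \<noteq> 0"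
  shows "\<bar>y - x\<bar> \<le> h"
proof -
  have "\<bar>(y - x) / h\<bar> \<le> 1" using assms(1,3) by blast
  with assms(2) show ?thesis by simp
qed

lemma Qw_support_subset:
  assumes "\<forall>t. K t \<noteq> 0 \<longrightarrow> \<bar>t\<bar> \<le> 1" "0 < h" "x1 + h \<le> x" "x + h \<le> x2"
  shows "closure {(y1, y2). Qw K k y1 y2 (x, h) \<noteq> 0} \<subseteq> {x1..x2} \<times> {x1..x2}"
proof (rule closure_minimal)
  show "{(y1, y2). Qw K k y1 y2 (x, h) \<noteq> 0} \<subseteq> {x1..x2} \<times> {x1..x2}"
  proof clarify
    fix y1 y2 assume "Qw K k y1 y2 (x, h) \<noteq> 0"
    then have "\<bar>y1 - x\<bar> \<le> h" "\<bar>y2 - x\<bar> \<le> h"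
      using abs_le_of_kernel_ne_zero[OF assms(1,2)] unfolding Qw_def by auto
    with assms(3,4) show "y1 \<in> {x1..x2} \<and> y2 \<in> {x1..x2}" by auto
  qed
qed (intro closed_Times closed_atLeastAtMost)

lemma Qw_le:
  assumes "\<forall>t. K t \<noteq> 0 \<longrightarrow> \<bar>t\<bar> \<le> 1" "\<forall>t. \<bar>K t\<bar> \<le> M" "0 < h" "2 * h \<le> d" "0 \<le> k"
  shows "Qw K k y1 y2 (x, h) \<le> M^2 * kpow d k"
proof (cases "K ((y1 - x) / h) = 0 \<or> K ((y2 - x) / h) = 0")
  case True
  then show ?thesis using kpow_nonneg[of d k] by (auto simp: Qw_def)
next
  case False
  then have "\<bar>y1 - x\<bar> \<le> h" "\<bar>y2 - x\<bar> \<le> h" using abs_le_of_kernel_ne_zero[OF assms(1,3)] by auto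
  then have "kpow \<bar>y1 - y2\<bar> k \<le> kpow d k" using assms(4,5) by (intro kpow_mono) auto
  moreover have "0 \<le> M" using assms(2) abs_ge_zero order_trans by blast
  ultimately have "\<bar>Qw K k y1 y2 (x, h)\<bar> \<le> kpow d k * M * M"
    unfolding Qw_def abs_mult using assms(2) kpow_nonneg by (intro mult_mono) auto
  then show ?thesis by (simp add: power2_eq_square mult_ac)
qed

lemma Qw_ge:
  assumes "\<forall>t. \<bar>t\<bar> \<le> 1/2 \<longrightarrow> m \<le> K t" "0 \<le> m" "0 < h" "0 \<le> k"
    and "y1 \<in> {x - h/2 .. x - h/6}" "y2 \<in> {x + h/6 .. x + h/2}"
  shows "m^2 * kpow (h/3) k \<le> Qw K k y1 y2 (x, h)"
proof -
  have "kpow (h/3) k \<le> kpow \<bar>y1 - y2\<bar> k" using assms(3-6) by (intro kpow_mono) auto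
  moreover have "\<bar>(y1 - x) / h\<bar> \<le> 1/2" "\<bar>(y2 - x) / h\<bar> \<le> 1/2"
    using assms(3,5,6) by (auto simp: abs_le_iff field_simps)
  then have "m \<le> K ((y1 - x) / h)" "m \<le> K ((y2 - x) / h)" using assms(1) by auto
  ultimately have "kpow (h/3) k * m * m \<le> Qw K k y1 y2 (x, h)"
    unfolding Qw_def using assms(2) kpow_nonneg by (intro mult_mono) auto
  then show ?thesis by (simp add: power2_eq_square mult_ac)
qed

definition A9_witness ::
  "(real \<Rightarrow> real) \<Rightarrow> real \<Rightarrow> real \<Rightarrow> real \<Rightarrow> real \<Rightarrow> real \<Rightarrow> real \<Rightarrow> real \<Rightarrow> real \<times> real \<Rightarrow> bool" where
  "A9_witness K k c4 C4 c5 hn x1 x2 s \<longleftrightarrow>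
     closure {(y1, y2). Qw K k y1 y2 s \<noteq> 0} \<subseteq> {x1..x2} \<times> {x1..x2} \<and>
     (\<forall>y1 y2. Qw K k y1 y2 s \<le> C4 * kpow hn k) \<and>
     (\<exists>xl1 xr1 xl2 xr2. x1 \<le> xl1 \<and> xr2 \<le> x2 \<and>
        xr1 - xl1 \<ge> c5 * hn \<and> xr2 - xl2 \<ge> c5 * hn \<and> xl2 - xr1 \<ge> c5 * hn \<and>
        (\<forall>y1 y2. y1 \<in> {xl1..xr1} \<and> y2 \<in> {xl2..xr2} \<longrightarrow> Qw K k y1 y2 s \<ge> c4 * kpow hn k))"

lemma A9_event_iff:
  "A9_event K k sl sr \<beta> c4 C4 c5 n w \<longleftrightarrow>
     (\<forall>x1 x2. sl \<le> x1 \<and> x2 \<le> sr \<and> x2 - x1 = (ln (card (S_set n w)) / n) powr (1 / (2 * \<beta> + 3)) \<longrightarrow>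
        (\<exists>s\<in>S_set n w. A9_witness K k c4 C4 c5 ((ln (card (S_set n w)) / n) powr (1 / (2 * \<beta> + 3))) x1 x2 s))"
  unfolding A9_event_def A9_witness_def Let_def ..

lemma A9_window_witness:
  fixes K :: "real \<Rightarrow> real"
  assumes Kz: "\<forall>t. K t \<noteq> 0 \<longrightarrow> \<bar>t\<bar> \<le> 1" and Kbd: "\<forall>t. \<bar>K t\<bar> \<le> M"
    and Kmin: "\<forall>t. \<bar>t\<bar> \<le> 1/2 \<longrightarrow> m \<le> K t" and "0 < m" "0 \<le> k"
    and h: "hn / 8 < h" "h \<le> hn / 4" and x: "x1 + hn / 4 \<le> x" "x \<le> x2 - hn / 4"
  shows "A9_witness K k (m^2 * (1/24) powr k) (M^2) (1/24) hn x1 x2 (x, h)"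
  unfolding A9_witness_def
proof (intro conjI allI)
  have "0 < h" using h by linarith
  show "closure {(y1, y2). Qw K k y1 y2 (x, h) \<noteq> 0} \<subseteq> {x1..x2} \<times> {x1..x2}"
    using Qw_support_subset[OF Kz \<open>0 < h\<close>] h x by simp
  show "Qw K k y1 y2 (x, h) \<le> M^2 * kpow hn k" for y1 y2
    using Qw_le[OF Kz Kbd \<open>0 < h\<close> _ \<open>0 \<le> k\<close>] h by simp
  have "m^2 * (1/24) powr k * kpow hn k = m^2 * kpow (1/24 * hn) k"
    using kpow_mult[of "1/24" hn k] \<open>0 < h\<close> h by simp
  also have "\<dots> \<le> m^2 * kpow (h/3) k"
    using kpow_mono[of "1/24 * hn" "h/3" k] \<open>0 < h\<close> h \<open>0 \<le> k\<close> by (intro mult_left_mono) auto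
  finally have "m^2 * (1/24) powr k * kpow hn k \<le> m^2 * kpow (h/3) k" .
  then have "m^2 * (1/24) powr k * kpow hn k \<le> Qw K k y1 y2 (x, h)"
    if "y1 \<in> {x - h/2 .. x - h/6}" "y2 \<in> {x + h/6 .. x + h/2}" for y1 y2
    using Qw_ge[OF Kmin _ \<open>0 < h\<close> \<open>0 \<le> k\<close> that] \<open>0 < m\<close> by linarith
  then show "\<exists>xl1 xr1 xl2 xr2. x1 \<le> xl1 \<and> xr2 \<le> x2 \<and>
       xr1 - xl1 \<ge> 1/24 * hn \<and> xr2 - xl2 \<ge> 1/24 * hn \<and> xl2 - xr1 \<ge> 1/24 * hn \<and>
       (\<forall>y1 y2. y1 \<in> {xl1..xr1} \<and> y2 \<in> {xl2..xr2} \<longrightarrow>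
          Qw K k y1 y2 (x, h) \<ge> m^2 * (1/24) powr k * kpow hn k)"
    using h x by (intro exI[of _ "x - h/2"] exI[of _ "x - h/6"] exI[of _ "x + h/6"] exI[of _ "x + h/2"]) auto
qed

lemma A9_event_of_grid_cover:
  fixes K :: "real \<Rightarrow> real" and w :: "nat \<Rightarrow> real"
  assumes "sl < sr" "0 \<le> k" "0 < \<beta>"
    and Kz: "\<forall>t. K t \<noteq> 0 \<longrightarrow> \<bar>t\<bar> \<le> 1" and Kbd: "\<forall>t. \<bar>K t\<bar> \<le> M"
    and Kmin: "\<forall>t. \<bar>t\<bar> \<le> 1/2 \<longrightarrow> m \<le> K t" and "0 < m"
    and "2 \<le> n" "8 \<le> N"
    and mesh: "(sr - sl) / N \<le> (ln 2 / n) powr (1/3) / 16"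
    and rate: "1.6 * (sr - sl) * (ln n / n) powr (1/3) \<le> (ln 2 / n) powr (1 / (2 * \<beta> + 3))"
    and samp: "\<forall>i<n. w i \<in> {sl..sr}" and cover: "\<forall>j<N. \<exists>i<n. w i \<in> grid_cell sl sr N j"
  shows "A9_event K k sl sr \<beta> (m^2 * (1/24) powr k) (M^2) (1/24) n w"
proof -
  define a where "a = 1 / (2 * \<beta> + 3)"
  have a: "0 < a" "a \<le> 1/3" using \<open>0 < \<beta>\<close> unfolding a_def by (auto simp: field_simps)
  obtain hmax: "(sr - sl) / 4 \<le> h_max n w" "h_max n w \<le> (sr - sl) / 2"
    and p: "2 \<le> card (S_set n w)"
    using h_max_card_S_set_of_grid_cover[OF \<open>sl < sr\<close> \<open>2 \<le> n\<close> \<open>8 \<le> N\<close> samp cover] by blast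
  define hn where "hn = (ln (card (S_set n w)) / n) powr a"
  have ln2n: "0 < ln 2 / real n" "ln 2 / real n \<le> 1"
    using \<open>2 \<le> n\<close> ln_2_less_1 by (auto simp: field_simps)
  have hn_ge: "(ln 2 / n) powr a \<le> hn"
    unfolding hn_def using p ln2n(1) a(1) by (intro powr_mono2 divide_right_mono) auto
  define \<delta> where "\<delta> = (sr - sl) / N"
  have "0 < \<delta>" using \<open>sl < sr\<close> \<open>8 \<le> N\<close> unfolding \<delta>_def by simp
  have "\<delta> \<le> hn / 16"
    unfolding \<delta>_def using mesh powr_mono'[OF a(2) ln2n(1)[THEN less_imp_le] ln2n(2)] hn_ge by linarith
  have "h_min n w \<le> 0.4 * ((sr - sl) / 2) * (ln n / n) powr (1/3)"
    unfolding h_min_def using hmax(2) by (intro mult_right_mono) auto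
  also have "\<dots> = 1.6 * (sr - sl) * (ln n / n) powr (1/3) / 8" by simp
  finally have "h_min n w \<le> hn / 8" using rate hn_ge unfolding a_def by linarith
  show ?thesis
    unfolding A9_event_iff a_def[symmetric] hn_def[symmetric]
  proof (intro allI impI)
    fix x1 x2 assume window: "sl \<le> x1 \<and> x2 \<le> sr \<and> x2 - x1 = hn"
    have "\<exists>i<n. x1 + hn / 4 \<le> w i \<and> w i \<le> x1 + hn / 4 + 2 * \<delta>"
      by (rule grid_cover_hits[OF \<open>sl < sr\<close> _ cover, of "x1 + hn / 4", folded \<delta>_def])
        (use \<open>8 \<le> N\<close> \<open>0 < \<delta>\<close> \<open>\<delta> \<le> hn / 16\<close> window in auto)
    then obtain i where i: "i < n" "x1 + hn / 4 \<le> w i" "w i \<le> x1 + hn / 4 + 2 * \<delta>" by blast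
    obtain h where h: "h \<in> H_set n w" "hn / 8 < h" "h \<le> hn / 4"
      using exists_H_set_between[of "hn / 4" n w] \<open>h_min n w \<le> hn / 8\<close> hmax(1) window
        \<open>0 < \<delta>\<close> \<open>\<delta> \<le> hn / 16\<close> by auto
    have "w i \<le> x2 - hn / 4" using i(3) \<open>0 < \<delta>\<close> \<open>\<delta> \<le> hn / 16\<close> window by linarith
    then have "A9_witness K k (m^2 * (1/24) powr k) (M^2) (1/24) hn x1 x2 (w i, h)"
      using A9_window_witness[OF Kz Kbd Kmin \<open>0 < m\<close> \<open>0 \<le> k\<close> h(2,3) i(2)] by blast
    moreover have "(w i, h) \<in> S_set n w" unfolding S_set_def using i(1) h(1) by blast
    ultimately show "\<exists>s\<in>S_set n w. A9_witness K k (m^2 * (1/24) powr k) (M^2) (1/24) hn x1 x2 s" ..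
  qed
qed

section \<open>Probability of covering the grid\<close>

lemma measure_PiM_PiE_const:
  fixes n :: nat
  assumes "prob_space D" "A \<in> sets D"
  shows "measure (PiM {..<n} (\<lambda>_. D)) (PiE {..<n} (\<lambda>_. A)) = measure D A ^ n"
proof -
  interpret prob_space D by fact
  interpret product_sigma_finite "\<lambda>_. D"
    by (simp add: product_sigma_finite_def sigma_finite_measure_axioms)
  have "emeasure (PiM {..<n} (\<lambda>_. D)) (PiE {..<n} (\<lambda>_. A)) = (\<Prod>i<n. emeasure D A)"
    using emeasure_PiM[of "{..<n}" "\<lambda>_. A"] assms(2) by simp
  also have "\<dots> = ennreal (measure D A ^ n)"
    by (simp add: emeasure_eq_measure prod_ennreal[symmetric] ennreal_power)
  finally show ?thesis by (simp add: measure_def)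
qed

text \<open>All \<open>n\<close> samples miss a set of probability \<open>\<ge> p\<close> with probability \<open>(1 - p)^n \<le> exp (- p n)\<close>;
  then a union bound over the \<open>N\<close> sets.\<close>
lemma measure_PiM_hits_all_ge:
  fixes D :: "real measure" and n :: nat
  assumes D: "prob_space D" "sets D = sets borel"
    and A: "A \<in> sets borel" "measure D A = 1"
    and C: "\<And>j. C j \<in> sets borel" "\<And>j. j < N \<Longrightarrow> p \<le> measure D (C j)"
  shows "1 - real N * exp (- (p * n))
    \<le> measure (PiM {..<n} (\<lambda>_. D)) (PiE {..<n} (\<lambda>_. A) - (\<Union>j<N. PiE {..<n} (\<lambda>_. UNIV - C j)))"
proof -
  interpret D: prob_space D by fact
  let ?P = "PiM {..<n} (\<lambda>_. D)"
  interpret P: prob_space ?P by (rule prob_space_PiM) (use D in auto)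
  let ?A = "PiE {..<n} (\<lambda>_. A)" and ?B = "\<lambda>j. PiE {..<n} (\<lambda>_. UNIV - C j)"
  have "space D = UNIV" using D(2) sets_eq_imp_space_eq by fastforce
  have sets: "?A \<in> sets ?P" "\<And>j. ?B j \<in> sets ?P" using A C D(2) by (auto intro!: sets_PiM_I_finite)
  have miss: "measure ?P (?B j) \<le> exp (- (p * n))" if "j < N" for j
  proof -
    have "measure ?P (?B j) = (1 - measure D (C j)) ^ n"
      using measure_PiM_PiE_const[OF D(1), of "UNIV - C j" n] D.prob_compl[of "C j"] C(1) D(2)
        \<open>space D = UNIV\<close> by simp
    also have "\<dots> \<le> exp (- p) ^ n"
      using C(2)[OF that] D.prob_le_1[of "C j"] exp_ge_add_one_self[of "- p"] by (intro power_mono) auto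
    also have "\<dots> = exp (- (p * n))" by (simp add: exp_of_nat_mult[symmetric] mult.commute)
    finally show ?thesis .
  qed
  have "measure ?P (?A \<inter> (\<Union>j<N. ?B j)) \<le> (\<Sum>j<N. measure ?P (?B j))"
    using sets by (intro order_trans[OF P.finite_measure_mono P.finite_measure_subadditive_finite]) auto
  also have "\<dots> \<le> (\<Sum>j<N. exp (- (p * n)))" by (intro sum_mono miss) simp
  also have "\<dots> = real N * exp (- (p * n))" by simp
  finally show ?thesis
    using P.finite_measure_Diff'[of ?A "\<Union>j<N. ?B j"] sets measure_PiM_PiE_const[OF D(1), of A n] A D(2)
    by auto
qed

definition grid_covering_event :: "real \<Rightarrow> real \<Rightarrow> nat \<Rightarrow> nat \<Rightarrow> (nat \<Rightarrow> real) set" where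
  "grid_covering_event a b N n =
     PiE {..<n} (\<lambda>_. {a..b}) - (\<Union>j<N. PiE {..<n} (\<lambda>_. UNIV - grid_cell a b N j))"

lemma mem_grid_covering_event:
  "w \<in> grid_covering_event a b N n \<longleftrightarrow>
     w \<in> PiE {..<n} (\<lambda>_. {a..b}) \<and> (\<forall>j<N. \<exists>i<n. w i \<in> grid_cell a b N j)"
  unfolding grid_covering_event_def by (auto simp: PiE_iff)

lemma sets_grid_covering_event:
  "sets D = sets borel \<Longrightarrow> grid_covering_event a b N n \<in> sets (PiM {..<n} (\<lambda>_. D))"
  unfolding grid_covering_event_def grid_cell_def
  by (intro sets.Diff sets.finite_UN sets_PiM_I_finite) auto

lemma measure_grid_covering_event_ge:
  fixes D :: "real measure" and n :: nat
  assumes "prob_space D" "sets D = sets borel" "a < b" "0 < N" "measure D {a..b} = 1"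
    and lower: "\<forall>x1 x2. a \<le> x1 \<and> x1 \<le> x2 \<and> x2 \<le> b \<longrightarrow> c * (x2 - x1) \<le> measure D {x1..x2}"
  shows "1 - real N * exp (- (c * ((b - a) / N) * n))
    \<le> measure (PiM {..<n} (\<lambda>_. D)) (grid_covering_event a b N n)"
  unfolding grid_covering_event_def
proof (rule measure_PiM_hits_all_ge[OF assms(1,2) _ assms(5)])
  fix j assume "j < N"
  define \<delta> where "\<delta> = (b - a) / N"
  have "0 < \<delta>" "real N * \<delta> = b - a" using assms(3,4) unfolding \<delta>_def by auto
  moreover have "(real j + 1) * \<delta> \<le> real N * \<delta>"
    using \<open>j < N\<close> \<open>0 < \<delta>\<close> by (intro mult_right_mono) auto
  ultimately have "c * ((a + (real j + 1) * \<delta>) - (a + real j * \<delta>))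
      \<le> measure D {a + real j * \<delta> .. a + (real j + 1) * \<delta>}"
    by (intro lower[rule_format]) (auto simp: algebra_simps)
  then show "c * ((b - a) / N) \<le> measure D (grid_cell a b N j)"
    unfolding grid_cell_def \<delta>_def[symmetric] by (simp add: algebra_simps)
qed (auto simp: grid_cell_def)

text \<open>This makes the mesh at most \<open>(ln 2 / n)^(1/3) / 16 \<le> h_n / 16\<close>, while
  \<open>N = O(n^(1/3))\<close> keeps the union bound \<open>N exp (- c (b - a) n / N)\<close> tending to 0.\<close>
definition grid_count :: "real \<Rightarrow> nat \<Rightarrow> nat" where
  "grid_count L n = nat \<lceil>16 * L * (n / ln 2) powr (1/3)\<rceil> + 8"

lemma grid_count_ge_8: "8 \<le> grid_count L n"
  unfolding grid_count_def by simp

lemma grid_count_bounds: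
  assumes "0 \<le> L"
  shows "16 * L * (n / ln 2) powr (1/3) + 8 \<le> grid_count L n"
    and "grid_count L n \<le> 16 * L * (n / ln 2) powr (1/3) + 9"
  using assms unfolding grid_count_def by (simp_all, linarith+)

lemma grid_mesh_le:
  assumes "0 < L" "0 < n"
  shows "L / grid_count L n \<le> (ln 2 / n) powr (1/3) / 16"
proof -
  define q where "q = (n / ln 2) powr (1/3)"
  have "0 < q" and inv: "(ln 2 / n) powr (1/3) * q = 1"
    unfolding q_def using assms(2) by (simp_all add: powr_mult[symmetric])
  have "16 * L * q \<le> grid_count L n" using grid_count_bounds(1)[of L n] assms(1) q_def by simp
  then have "L / grid_count L n \<le> L / (16 * L * q)"
    using assms(1) \<open>0 < q\<close> grid_count_ge_8[of L n] by (intro divide_left_mono) auto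
  also have "\<dots> = (ln 2 / n) powr (1/3) * q / (16 * q)" using assms(1) \<open>0 < q\<close> inv by simp
  finally show ?thesis using \<open>0 < q\<close> by simp
qed

lemma measure_grid_covering_event_tendsto_1:
  fixes D :: "real measure"
  assumes "prob_space D" "sets D = sets borel" "a < b" "measure D {a..b} = 1" "0 < c"
    and lower: "\<forall>x1 x2. a \<le> x1 \<and> x1 \<le> x2 \<and> x2 \<le> b \<longrightarrow> c * (x2 - x1) \<le> measure D {x1..x2}"
  shows "(\<lambda>n. measure (PiM {..<n} (\<lambda>_. D)) (grid_covering_event a b (grid_count (b - a) n) n)) \<longlonglongrightarrow> 1"
proof -
  define L where "L = b - a"
  define U where "U n = 16 * L * (real n / ln 2) powr (1/3) + 9" for n :: nat
  have "0 < L" using assms(3) L_def by simp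
  have lim: "(\<lambda>n. U n * exp (- (c * L * n / U n))) \<longlonglongrightarrow> 0"
    unfolding U_def using \<open>0 < L\<close> \<open>0 < c\<close> by real_asymp
  have lower_bound: "1 - U n * exp (- (c * L * n / U n))
      \<le> measure (PiM {..<n} (\<lambda>_. D)) (grid_covering_event a b (grid_count L n) n)" for n
  proof -
    have N: "8 \<le> real (grid_count L n)" "real (grid_count L n) \<le> U n"
      using grid_count_ge_8[of L n] grid_count_bounds(2)[of L n] \<open>0 < L\<close> unfolding U_def by auto
    then have "c * L * n / U n \<le> c * (L / grid_count L n) * n"
      using \<open>0 < L\<close> \<open>0 < c\<close> by (simp add: frac_le mult_left_mono divide_simps)
    then have "real (grid_count L n) * exp (- (c * (L / grid_count L n) * n))
        \<le> U n * exp (- (c * L * n / U n))"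
      using N by (intro mult_mono) auto
    then show ?thesis
      using measure_grid_covering_event_ge[OF assms(1-3) _ assms(4) lower, of "grid_count L n" n] N
      unfolding L_def by linarith
  qed
  have upper_bound: "measure (PiM {..<n} (\<lambda>_. D)) E \<le> 1" for n :: nat and E
    using assms(1) by (intro prob_space.prob_le_1 prob_space_PiM)
  show ?thesis
    unfolding L_def[symmetric]
  proof (rule tendsto_sandwich[where f = "\<lambda>n. 1 - U n * exp (- (c * L * n / U n))" and h = "\<lambda>_. 1"])
    show "(\<lambda>n. 1 - U n * exp (- (c * L * n / U n))) \<longlonglongrightarrow> 1"
      using tendsto_diff[OF tendsto_const lim, of 1] by simp
  qed (use lower_bound upper_bound in auto)
qed

section \<open>Assumption A9\<close>

lemma eventually_rate_le:
  assumes "0 < \<beta>" "0 < C"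
  shows "eventually (\<lambda>n::nat. C * (ln n / n) powr (1/3) \<le> (ln 2 / n) powr (1 / (2 * \<beta> + 3))) sequentially"
proof -
  define e where "e = 1/3 - 1 / (2 * \<beta> + 3)"
  have "0 < e" using assms(1) unfolding e_def by (simp add: field_simps)
  have "1 / (2 * \<beta> + 3) = 1/3 - e" unfolding e_def by simp
  then show ?thesis using \<open>0 < e\<close> assms(2) by (simp only:) real_asymp
qed

lemma prob_Icc_support_eq_1:
  fixes D :: "real measure"
  assumes "prob_space D" "sets D = sets borel" "bounded (dist_support D)"
  shows "measure D {Inf (dist_support D)..Sup (dist_support D)} = 1"
proof -
  interpret prob_space D by fact
  let ?S = "dist_support D"
  define F where "F = {T. \<exists>x e. e > 0 \<and> T = {x - e<..<x + e} \<and> measure D T = 0}"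
  have "\<And>T. T \<in> F \<Longrightarrow> open T" unfolding F_def by auto
  then obtain F' where F': "F' \<subseteq> F" "countable F'" "\<Union>F' = \<Union>F" using Lindelof by metis
  have null: "(\<Union>T\<in>F'. T) \<in> null_sets D"
  proof (rule null_sets_UN'[OF F'(2)])
    fix T assume "T \<in> F'"
    then obtain x e where "T = {x - e<..<x + e}" "measure D T = 0" using F'(1) unfolding F_def by auto
    then show "T \<in> null_sets D" using assms(2) by (simp add: emeasure_eq_measure null_setsI)
  qed
  have "- ?S \<subseteq> \<Union>F"
  proof
    fix x assume "x \<in> - ?S"
    then obtain e where "e > 0" "measure D {x - e<..<x + e} = 0"
      unfolding dist_support_def using measure_nonneg[of D] by (auto simp: not_less order.antisym)
    then show "x \<in> \<Union>F" unfolding F_def by (intro UnionI[of "{x - e<..<x + e}"]) auto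
  qed
  moreover have "?S \<subseteq> {Inf ?S..Sup ?S}"
    using bounded_imp_bdd_below[OF assms(3)] bounded_imp_bdd_above[OF assms(3)]
    by (auto intro: cInf_lower cSup_upper)
  ultimately have "UNIV - {Inf ?S..Sup ?S} \<in> null_sets D"
    using F'(3) assms(2) by (intro null_sets_subset[OF null]) auto
  then have "prob (UNIV - {Inf ?S..Sup ?S}) = 0" by (simp add: measure_eq_0_null_sets)
  moreover have "space D = UNIV" using assms(2) sets_eq_imp_space_eq by fastforce
  ultimately show ?thesis using prob_compl[of "{Inf ?S..Sup ?S}"] assms(2) by simp
qed

lemma compact_support_kernel_bounds:
  fixes K :: "real \<Rightarrow> real"
  assumes "closure {t. K t \<noteq> 0} \<subseteq> {-1..1}" "continuous_on UNIV K"
    and "\<And>t. -1 < t \<Longrightarrow> t < 1 \<Longrightarrow> 0 < K t"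
  obtains M m where "0 < m" "0 < M" "\<forall>t. K t \<noteq> 0 \<longrightarrow> \<bar>t\<bar> \<le> 1" "\<forall>t. \<bar>K t\<bar> \<le> M"
    "\<forall>t. \<bar>t\<bar> \<le> 1/2 \<longrightarrow> m \<le> K t"
proof -
  have cont: "continuous_on S K" for S using assms(2) by (rule continuous_on_subset) simp
  have Kz: "\<forall>t. K t \<noteq> 0 \<longrightarrow> \<bar>t\<bar> \<le> 1"
    using closure_subset[of "{t. K t \<noteq> 0}"] assms(1) by (auto simp: abs_le_iff)
  have "compact (K ` {-1..1})" by (intro compact_continuous_image cont) simp
  then have "bounded (K ` {-1..1})" by (rule compact_imp_bounded)
  then obtain B where B: "\<forall>y\<in>K ` {-1..1}. \<bar>y\<bar> \<le> B" by (auto simp: bounded_real)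
  have Kbd: "\<bar>K t\<bar> \<le> \<bar>B\<bar>" for t
  proof (cases "K t = 0")
    case False
    then have "t \<in> {-1..1}" using Kz by (auto simp: abs_le_iff)
    then show ?thesis using B by force
  qed simp
  obtain t0 where t0: "t0 \<in> {-1/2..1/2}" "\<forall>t\<in>{-1/2..1/2}. K t0 \<le> K t"
    using continuous_attains_inf[OF _ _ cont, of "{-1/2..1/2}"] by auto
  have "0 < K t0" using t0(1) assms(3) by auto
  moreover have "\<forall>t. \<bar>t\<bar> \<le> 1/2 \<longrightarrow> K t0 \<le> K t"
  proof (intro allI impI)
    fix t :: real assume "\<bar>t\<bar> \<le> 1/2"
    then have "t \<in> {-1/2..1/2}" by (simp add: abs_le_iff) linarith
    then show "K t0 \<le> K t" using t0(2) by blast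
  qed
  moreover have "0 < \<bar>B\<bar>" using Kbd[of t0] \<open>0 < K t0\<close> by linarith
  ultimately show ?thesis using that Kz Kbd by blast
qed

lemma grid_covering_event_subset_A9_event:
  fixes D :: "real measure" and K :: "real \<Rightarrow> real"
  assumes "sets D = sets borel" "sl < sr" "0 \<le> k" "0 < \<beta>"
    and Kz: "\<forall>t. K t \<noteq> 0 \<longrightarrow> \<bar>t\<bar> \<le> 1" and Kbd: "\<forall>t. \<bar>K t\<bar> \<le> M"
    and Kmin: "\<forall>t. \<bar>t\<bar> \<le> 1/2 \<longrightarrow> m \<le> K t" and "0 < m"
    and "2 \<le> n" and rate: "1.6 * (sr - sl) * (ln n / n) powr (1/3) \<le> (ln 2 / n) powr (1 / (2 * \<beta> + 3))"
  shows "grid_covering_event sl sr (grid_count (sr - sl) n) n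
    \<subseteq> {w \<in> space (PiM {..<n} (\<lambda>_. D)). A9_event K k sl sr \<beta> (m^2 * (1/24) powr k) (M^2) (1/24) n w}"
proof
  fix w assume "w \<in> grid_covering_event sl sr (grid_count (sr - sl) n) n"
  then have w: "w \<in> PiE {..<n} (\<lambda>_. {sl..sr})"
    and cover: "\<forall>j<grid_count (sr - sl) n. \<exists>i<n. w i \<in> grid_cell sl sr (grid_count (sr - sl) n) j"
    by (simp_all add: mem_grid_covering_event)
  have "space (PiM {..<n} (\<lambda>_. D)) = PiE {..<n} (\<lambda>_. UNIV)"
    using sets_eq_imp_space_eq[OF assms(1)] by (simp add: space_PiM)
  then have "w \<in> space (PiM {..<n} (\<lambda>_. D))" using w by (auto simp: PiE_iff)
  moreover have samp: "\<forall>i<n. w i \<in> {sl..sr}" using w by (simp add: PiE_iff)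
  have mesh: "(sr - sl) / grid_count (sr - sl) n \<le> (ln 2 / n) powr (1/3) / 16"
    by (rule grid_mesh_le) (use \<open>sl < sr\<close> \<open>2 \<le> n\<close> in auto)
  have "A9_event K k sl sr \<beta> (m^2 * (1/24) powr k) (M^2) (1/24) n w"
    by (rule A9_event_of_grid_cover[OF \<open>sl < sr\<close> \<open>0 \<le> k\<close> \<open>0 < \<beta>\<close> Kz Kbd Kmin \<open>0 < m\<close>
        \<open>2 \<le> n\<close> grid_count_ge_8 mesh rate samp cover])
  ultimately show "w \<in> {w \<in> space (PiM {..<n} (\<lambda>_. D)).
      A9_event K k sl sr \<beta> (m^2 * (1/24) powr k) (M^2) (1/24) n w}" by blast
qed

lemma A9_event_with_high_probability:
  fixes D :: "real measure" and K :: "real \<Rightarrow> real"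
  assumes D: "prob_space D" "sets D = sets borel" "measure D {sl..sr} = 1" and "sl < sr" "0 < c"
    and lower: "\<forall>x1 x2. sl \<le> x1 \<and> x1 \<le> x2 \<and> x2 \<le> sr \<longrightarrow> c * (x2 - x1) \<le> measure D {x1..x2}"
    and "0 \<le> k" "0 < \<beta>"
    and Kz: "\<forall>t. K t \<noteq> 0 \<longrightarrow> \<bar>t\<bar> \<le> 1" and Kbd: "\<forall>t. \<bar>K t\<bar> \<le> M"
    and Kmin: "\<forall>t. \<bar>t\<bar> \<le> 1/2 \<longrightarrow> m \<le> K t" and "0 < m"
  shows "\<exists>F. (\<forall>n. F n \<in> sets (PiM {..<n} (\<lambda>_. D)) \<and>
      F n \<subseteq> {w \<in> space (PiM {..<n} (\<lambda>_. D)). A9_event K k sl sr \<beta> (m^2 * (1/24) powr k) (M^2) (1/24) n w}) \<and>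
    (\<lambda>n. measure (PiM {..<n} (\<lambda>_. D)) (F n)) \<longlonglongrightarrow> 1"
proof -
  have "0 < 1.6 * (sr - sl)" using \<open>sl < sr\<close> by simp
  then have "eventually (\<lambda>n::nat. (2::nat) \<le> n \<and>
      1.6 * (sr - sl) * (ln n / n) powr (1/3) \<le> (ln 2 / n) powr (1 / (2 * \<beta> + 3))) sequentially"
    by (intro eventually_conj eventually_ge_at_top eventually_rate_le \<open>0 < \<beta>\<close>)
  then obtain n0 :: nat where n0: "\<forall>n\<ge>n0. (2::nat) \<le> n \<and>
      1.6 * (sr - sl) * (ln n / n) powr (1/3) \<le> (ln 2 / n) powr (1 / (2 * \<beta> + 3))"
    unfolding eventually_sequentially ..
  define F where "F n = (if n0 \<le> n then grid_covering_event sl sr (grid_count (sr - sl) n) n else {})" for n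
  have "F n \<in> sets (PiM {..<n} (\<lambda>_. D))" for n
    unfolding F_def using sets_grid_covering_event[OF D(2)] by simp
  moreover have "F n \<subseteq> {w \<in> space (PiM {..<n} (\<lambda>_. D)).
      A9_event K k sl sr \<beta> (m^2 * (1/24) powr k) (M^2) (1/24) n w}" for n
    unfolding F_def using n0 grid_covering_event_subset_A9_event[OF D(2) \<open>sl < sr\<close> \<open>0 \<le> k\<close> \<open>0 < \<beta>\<close>
      Kz Kbd Kmin \<open>0 < m\<close>] by simp
  moreover have "(\<lambda>n. measure (PiM {..<n} (\<lambda>_. D)) (F n)) \<longlonglongrightarrow> 1"
    using measure_grid_covering_event_tendsto_1[OF D(1,2) \<open>sl < sr\<close> D(3) \<open>0 < c\<close> lower]
    by (rule Lim_transform_eventually) (auto simp: F_def eventually_sequentially)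
  ultimately show ?thesis by (intro exI[of _ F] conjI allI)
qed

theorem proposition3:
  fixes D :: "real measure" and K :: "real \<Rightarrow> real" and k sl sr :: real
  assumes probD: "prob_space D"
    and setsD: "sets D = sets borel"
    and supp_ne: "dist_support D \<noteq> {}"
    and supp_bdd: "bounded (dist_support D)"
    and sl_def: "sl = Inf (dist_support D)"
    and sr_def: "sr = Sup (dist_support D)"
    and k_nonneg: "k \<ge> 0"
    and A8: "\<exists>c3 C3. c3 > 0 \<and> C3 > 0 \<and>
              (\<forall>x1 x2. sl \<le> x1 \<and> x1 \<le> x2 \<and> x2 \<le> sr \<longrightarrow>
                 c3 * (x2 - x1) \<le> measure D {x1..x2} \<and> measure D {x1..x2} \<le> C3 * (x2 - x1))"
    and K_supp: "closure {t. K t \<noteq> 0} = {-1..1}"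
    and K_cont: "continuous_on UNIV K"
    and K_pos: "\<And>t. -1 < t \<Longrightarrow> t < 1 \<Longrightarrow> K t > 0"
  shows "\<forall>\<beta>. 0 < \<beta> \<and> \<beta> \<le> 1 \<longrightarrow>
           (\<exists>c4 C4 c5. c4 > 0 \<and> C4 > 0 \<and> c5 > 0 \<and>
              (\<exists>F :: nat \<Rightarrow> (nat \<Rightarrow> real) set.
                 (\<forall>n. F n \<in> sets (PiM {..<n} (\<lambda>_. D)) \<and>
                      F n \<subseteq> {w \<in> space (PiM {..<n} (\<lambda>_. D)). A9_event K k sl sr \<beta> c4 C4 c5 n w}) \<and>
                 (\<lambda>n. measure (PiM {..<n} (\<lambda>_. D)) (F n)) \<longlonglongrightarrow> 1))"
proof -
  have full: "measure D {sl..sr} = 1"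
    using prob_Icc_support_eq_1[OF probD setsD supp_bdd] unfolding sl_def sr_def .
  obtain c3 C3 where "0 < c3" and A8': "\<forall>x1 x2. sl \<le> x1 \<and> x1 \<le> x2 \<and> x2 \<le> sr \<longrightarrow>
      c3 * (x2 - x1) \<le> measure D {x1..x2} \<and> measure D {x1..x2} \<le> C3 * (x2 - x1)"
    using A8 by blast
  have lower: "\<forall>x1 x2. sl \<le> x1 \<and> x1 \<le> x2 \<and> x2 \<le> sr \<longrightarrow> c3 * (x2 - x1) \<le> measure D {x1..x2}"
    using A8' by blast
  have "sl \<le> sr" unfolding sl_def sr_def
    using supp_ne bounded_imp_bdd_above[OF supp_bdd] bounded_imp_bdd_below[OF supp_bdd] by (rule cInf_le_cSup)
  moreover from this have "measure D {sl..sl} \<le> 0" using A8'[rule_format, of sl sl] by simp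
  with full have "sl \<noteq> sr" by auto
  ultimately have "sl < sr" by simp
  obtain M m where "0 < m" "0 < M" and K: "\<forall>t. K t \<noteq> 0 \<longrightarrow> \<bar>t\<bar> \<le> 1" "\<forall>t. \<bar>K t\<bar> \<le> M"
      "\<forall>t. \<bar>t\<bar> \<le> 1/2 \<longrightarrow> m \<le> K t"
    by (rule compact_support_kernel_bounds[OF K_supp[THEN equalityD1] K_cont K_pos])
  show ?thesis
    using A9_event_with_high_probability[OF probD setsD full \<open>sl < sr\<close> \<open>0 < c3\<close> lower k_nonneg
        _ K \<open>0 < m\<close>] \<open>0 < m\<close> \<open>0 < M\<close>
    by (intro allI impI exI[of _ "m^2 * (1/24) powr k"] exI[of _ "M^2"] exI[of _ "1/24"] conjI) simp_all
qed

end
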